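(* For all integers $r\ge 3$ and $t$ with $1\le t\le r-2$, there exists an integer $n(r,t)$ such that for every $n\ge n(r,t)$, $$\iota_0(t,n;r)=\max\left\{n^{r-t}-(n-1)^{r-t}+t(n-1),\ (t+2)n^{r-t-1}-(t+1)n^{r-t-2}\right\}.$$
   Context: Let $X_\ell=[n_\ell]$ for $1\le\ell\le r$. For $A,B\in X_1\times\dots\times X_r$, write $A\cap B=\{\ell\in[r]:A[\ell]=B[\ell]\}$, where $A[\ell]$ is the $\ell$-th coordinate. A family $\mathcal F\subseteq X_1\times\dots\times X_r$ is $t$-intersecting if $|A\cap B|\ge t$ for all $A,B\in\mathcal F$. Let $\bigcap\mathcal F=\{\ell\in[r]:\text{all members of }\mathcal F\text{ have the same }\ell\text{-th coordinate}\}$. A $t$-intersecting family is non-trivial if $|\bigcap\mathcal F|<t$. For integers $r>t\ge1$ and $n_1\ge\dots\ge n_r\ge 2$, $\iota_0(t,n_1,\dots,n_r)$ denotes the maximum size of a non-trivial $t$-intersecting family $\mathcal F\subseteq X_1\times\dots\times X_r$, and $\iota_0(t,n;r)=\iota_0(t,n,\dots,n)$ with $r$ entries equal to $n$. *)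

theory Defs
  imports "HOL-Library.FuncSet"
begin

text \<open>Elements of X_1 x ... x X_r are modelled as extensional functions on the
coordinate set {0..<r} (coordinate l+1 of the paper is index l here), with
the l-th coordinate in {0..<ns l} (a copy of [n_l]).\<close>

definition grid :: "nat \<Rightarrow> (nat \<Rightarrow> nat) \<Rightarrow> (nat \<Rightarrow> nat) set" where
  "grid r ns = PiE {..<r} (\<lambda>l. {..<ns l})"

definition agree :: "nat \<Rightarrow> (nat \<Rightarrow> nat) \<Rightarrow> (nat \<Rightarrow> nat) \<Rightarrow> nat set" where
  "agree r A B = {l \<in> {..<r}. A l = B l}"

definition t_intersecting :: "nat \<Rightarrow> nat \<Rightarrow> (nat \<Rightarrow> nat) set \<Rightarrow> bool" where
  "t_intersecting r t F \<longleftrightarrow> (\<forall>A\<in>F. \<forall>B\<in>F. card (agree r A B) \<ge> t)"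

definition common_coords :: "nat \<Rightarrow> (nat \<Rightarrow> nat) set \<Rightarrow> nat set" where
  "common_coords r F = {l \<in> {..<r}. \<forall>A\<in>F. \<forall>B\<in>F. A l = B l}"

definition nontrivial_t_intersecting ::
  "nat \<Rightarrow> (nat \<Rightarrow> nat) \<Rightarrow> nat \<Rightarrow> (nat \<Rightarrow> nat) set \<Rightarrow> bool" where
  "nontrivial_t_intersecting r ns t F \<longleftrightarrow>
     F \<subseteq> grid r ns \<and> t_intersecting r t F \<and> card (common_coords r F) < t"

definition iota0 :: "nat \<Rightarrow> nat \<Rightarrow> (nat \<Rightarrow> nat) \<Rightarrow> nat" where
  "iota0 r t ns = Max (card ` {F. nontrivial_t_intersecting r ns t F})"

definition iota0_uniform :: "nat \<Rightarrow> nat \<Rightarrow> nat \<Rightarrow> nat" where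
  "iota0_uniform t n r = iota0 r t (\<lambda>_. n)"

end

theory Submission
  imports Defs
begin

text \<open>Identify a vector A with its graph, the set of pairs (l, A l): two vectors agree in as many
coordinates as their graphs share points. Call a set Q of such pairs fat if for every vector g
some member through Q meets the graph of g only inside Q. Taking for g a member shows that every
member meets a fat set in at least t points; hence two fat sets share at least t points, and a
fat t-set would lie in every member, which non-triviality forbids.

Fix a member B0. Every member agrees with B0 on a t-set of points, which is not fat, and therefore
passes through a (t+1)-set; at most n^(r-t-1) members pass through a fat (t+1)-set and at most
r n^(r-t-2) through a non-fat one. So if there are fewer than r-t fat (t+1)-sets, F is no larger
than n^(r-t) - (n-1)^(r-t) once n is large. Otherwise either three fat (t+1)-sets are the
(t+1)-subsets of one (t+2)-set, which every member then meets in t+1 points (the Frankl family),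
or the fat (t+1)-sets form a sunflower with a kernel of size t and at least r-t petals; the
petals then cover all coordinates outside the kernel and force every member missing the kernel to
agree there with one fixed vector (the Hilton-Milner family). Both families are non-trivial and
t-intersecting, and their sizes are the two terms of the maximum.\<close>

section \<open>Counting grid points\<close>

lemma card_PiE_fix_avoid:
  assumes "finite I" "D1 \<subseteq> I" "D2 \<subseteq> I" "D1 \<inter> D2 = {}" "\<forall>l\<in>I. c l < n"
  shows "card {A \<in> PiE I (\<lambda>_. {..<n}). (\<forall>l\<in>D1. A l = c l) \<and> (\<forall>l\<in>D2. A l \<noteq> c l)}
     = (n - 1) ^ card D2 * n ^ card (I - D1 - D2)"
proof -
  define B where
    "B l = (if l \<in> D1 then {c l} else if l \<in> D2 then {..<n} - {c l} else {..<n})" for l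
  have "{A \<in> PiE I (\<lambda>_. {..<n}). (\<forall>l\<in>D1. A l = c l) \<and> (\<forall>l\<in>D2. A l \<noteq> c l)} = PiE I B"
    (is "?X = _")
  proof (intro equalityI subsetI)
    fix x assume "x \<in> ?X"
    then show "x \<in> PiE I B" using assms(2-5) by (auto simp: B_def PiE_iff)
  next
    fix x assume x: "x \<in> PiE I B"
    have xB: "x l \<in> B l" if "l \<in> I" for l using x that by (rule PiE_mem)
    have "x l = c l" if "l \<in> D1" for l
      using xB[OF subsetD[OF assms(2) that]] that by (simp add: B_def)
    moreover have "x l \<noteq> c l" if "l \<in> D2" for l
      using xB[OF subsetD[OF assms(3) that]] that assms(4) by (auto simp: B_def split: if_splits)
    moreover have "x l < n" if "l \<in> I" for l
      using xB[OF that] assms(5) that by (auto simp: B_def split: if_splits)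
    ultimately show "x \<in> ?X" using x by (auto simp: PiE_iff)
  qed
  moreover have "card (B l) = (if l \<in> D1 then 1 else if l \<in> D2 then n - 1 else n)"
    if "l \<in> I" for l
    using assms(5) that by (auto simp: B_def)
  then have "card (PiE I B) = (\<Prod>l\<in>I. if l \<in> D1 then 1 else if l \<in> D2 then n - 1 else n)"
    using assms(1) by (simp add: card_PiE)
  moreover have "I \<inter> - D1 \<inter> D2 = D2" "I \<inter> - D1 \<inter> - D2 = I - D1 - D2"
    using assms(3,4) by auto
  ultimately show ?thesis
    using assms(1) by (simp add: prod.If_cases Int_def)
qed

lemma finite_grid_uniform [simp]: "finite (grid r (\<lambda>_. n))"
  unfolding grid_def by (simp add: finite_PiE)

lemma card_grid_fix_avoid:
  assumes "D1 \<subseteq> {..<r}" "D2 \<subseteq> {..<r}" "D1 \<inter> D2 = {}" "c \<in> grid r (\<lambda>_. n)"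
  shows "card {A \<in> grid r (\<lambda>_. n). (\<forall>l\<in>D1. A l = c l) \<and> (\<forall>l\<in>D2. A l \<noteq> c l)}
     = (n - 1) ^ card D2 * n ^ card ({..<r} - D1 - D2)"
  unfolding grid_def by (rule card_PiE_fix_avoid) (use assms in \<open>auto simp: grid_def PiE_iff\<close>)

lemma card_grid_fix:
  assumes "D \<subseteq> {..<r}" "c \<in> grid r (\<lambda>_. n)"
  shows "card {A \<in> grid r (\<lambda>_. n). \<forall>l\<in>D. A l = c l} = n ^ (r - card D)"
  using card_grid_fix_avoid[of D r "{}" c n] assms by (simp add: card_Diff_subset finite_subset)

lemma card_UN_le_mult:
  assumes "finite I" "\<And>i. i \<in> I \<Longrightarrow> card (A i) \<le> K"
  shows "card (\<Union>i\<in>I. A i) \<le> card I * K"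
proof -
  have "card (\<Union>i\<in>I. A i) \<le> (\<Sum>i\<in>I. card (A i))" by (rule card_UN_le[OF assms(1)])
  also have "\<dots> \<le> (\<Sum>i\<in>I. K)" by (rule sum_mono) (rule assms(2))
  finally show ?thesis by simp
qed

lemma card_ge_if_card_Diff_singleton_ge:
  assumes U: "finite U" "card U = t + 2" and X: "X \<subseteq> U" and P: "P \<subseteq> U" "card P = 3"
    and P_X: "\<forall>p\<in>P. t \<le> card (X - {p})"
  shows "t + 1 \<le> card X"
proof (rule ccontr)
  assume small: "\<not> t + 1 \<le> card X"
  have fX: "finite X" using U(1) X finite_subset by blast
  have "p \<notin> X" if "p \<in> P" for p
  proof
    assume "p \<in> X"
    then have "0 < card X" "card (X - {p}) = card X - 1" using fX card_gt_0_iff by auto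
    then show False using P_X that small by fastforce
  qed
  then have "card X \<le> card (U - P)" using X U(1) by (intro card_mono) auto
  also have "\<dots> = t - 1" using U P finite_subset[OF P(1) U(1)] by (simp add: card_Diff_subset)
  finally have "card X \<le> t - 1" .
  moreover obtain p where "p \<in> P" using P(2) by (metis card.empty ex_in_conv zero_neq_numeral)
  then have "t \<le> card X" using P_X card_mono[OF fX, of "X - {p}"] by fastforce
  ultimately have "t = 0" by linarith
  then show False using card_mono[OF U(1) P(1)] U(2) P(2) by simp
qed

section \<open>The Hilton-Milner and Frankl families\<close>

definition hilton_milner_family :: "nat \<Rightarrow> nat \<Rightarrow> (nat \<Rightarrow> nat) \<Rightarrow> nat set \<Rightarrow> (nat \<Rightarrow> nat) set" where
  "hilton_milner_family r n c T = {A \<in> grid r (\<lambda>_. n).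
     ((\<forall>l\<in>T. A l = c l) \<and> (\<exists>l\<in>{..<r} - T. A l = c l))
     \<or> (\<exists>d\<in>T. (\<forall>l\<in>{..<r} - {d}. A l = c l) \<and> A d \<noteq> c d)}"

definition frankl_family :: "nat \<Rightarrow> nat \<Rightarrow> (nat \<Rightarrow> nat) \<Rightarrow> nat set \<Rightarrow> nat \<Rightarrow> (nat \<Rightarrow> nat) set" where
  "frankl_family r n c D t = {A \<in> grid r (\<lambda>_. n). t + 1 \<le> card {l\<in>D. A l = c l}}"

lemma grid_fun_upd:
  "c \<in> grid r (\<lambda>_. n) \<Longrightarrow> l < r \<Longrightarrow> v < n \<Longrightarrow> c(l := v) \<in> grid r (\<lambda>_. n)"
  by (auto simp: grid_def PiE_iff extensional_def)

lemma ex_less_neq: "2 \<le> (n::nat) \<Longrightarrow> \<exists>v<n. v \<noteq> x"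
  by (cases "x = 0") (auto intro: exI[of _ 0] exI[of _ 1])

lemma common_coords_eq_empty:
  assumes "c \<in> F" "\<forall>l<r. \<exists>A\<in>F. A l \<noteq> c l"
  shows "common_coords r F = {}"
  using assms unfolding common_coords_def by blast

lemma agree_commute: "agree r A B = agree r B A"
  unfolding agree_def by auto

lemma card_le_card_agree: "X \<subseteq> agree r A B \<Longrightarrow> card X \<le> card (agree r A B)"
  by (rule card_mono) (auto simp: agree_def)

lemma card_hilton_milner_family:
  assumes c: "c \<in> grid r (\<lambda>_. n)" and T: "T \<subseteq> {..<r}"
  shows "card (hilton_milner_family r n c T)
    = n ^ (r - card T) - (n - 1) ^ (r - card T) + card T * (n - 1)"
proof -
  define X0 where "X0 = {A \<in> grid r (\<lambda>_. n). \<forall>l\<in>T. A l = c l}"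
  define X1 where "X1 = {A \<in> grid r (\<lambda>_. n). (\<forall>l\<in>T. A l = c l) \<and> (\<forall>l\<in>{..<r} - T. A l \<noteq> c l)}"
  define Y where "Y d = {A \<in> grid r (\<lambda>_. n). (\<forall>l\<in>{..<r} - {d}. A l = c l) \<and> (\<forall>l\<in>{d}. A l \<noteq> c l)}"
    for d
  have fT: "finite T" using T finite_subset by auto
  have "card ({..<r} - T) = r - card T" using T fT by (simp add: card_Diff_subset)
  then have cX1: "card X1 = (n - 1) ^ (r - card T)"
    unfolding X1_def by (subst card_grid_fix_avoid) (use T c in auto)
  have cY: "card (Y d) = n - 1" if "d \<in> T" for d
  proof -
    have "{..<r} - ({..<r} - {d}) - {d} = {}" by auto
    then show ?thesis
      unfolding Y_def by (subst card_grid_fix_avoid) (use T c that in auto)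
  qed
  have "hilton_milner_family r n c T = (X0 - X1) \<union> (\<Union>d\<in>T. Y d)"
    unfolding hilton_milner_family_def X0_def X1_def Y_def by auto
  then have "card (hilton_milner_family r n c T) = card (X0 - X1) + card (\<Union>d\<in>T. Y d)"
    by (simp only:) (rule card_Un_disjoint, use fT in \<open>auto simp: X0_def Y_def\<close>)
  moreover have "card (\<Union>d\<in>T. Y d) = card T * (n - 1)"
  proof -
    have "card (\<Union>d\<in>T. Y d) = (\<Sum>d\<in>T. card (Y d))"
      by (rule card_UN_disjoint) (use fT T in \<open>auto simp: Y_def\<close>)
    then show ?thesis using cY by simp
  qed
  moreover have "card (X0 - X1) = n ^ (r - card T) - (n - 1) ^ (r - card T)"
    using card_grid_fix[OF T c] cX1
    by (subst card_Diff_subset) (auto simp: X0_def X1_def)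
  ultimately show ?thesis by simp
qed

lemma frankl_family_eq_Un:
  assumes D: "finite D" "card D = t + 2"
  shows "frankl_family r n c D t = {A \<in> grid r (\<lambda>_. n). \<forall>l\<in>D. A l = c l}
    \<union> (\<Union>d\<in>D. {A \<in> grid r (\<lambda>_. n). (\<forall>l\<in>D - {d}. A l = c l) \<and> (\<forall>l\<in>{d}. A l \<noteq> c l)})"
    (is "_ = ?rhs")
proof (intro equalityI subsetI)
  fix A assume A: "A \<in> frankl_family r n c D t"
  let ?E = "{l\<in>D. A l = c l}"
  have "card (D - ?E) \<le> 1"
    using A D by (auto simp: frankl_family_def card_Diff_subset)
  then consider "D - ?E = {}" | d where "D - ?E = {d}"
    by (metis card_0_eq card_1_singletonE D(1) finite_Diff le_neq_implies_less less_one)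
  then show "A \<in> ?rhs"
    by cases (use A in \<open>auto simp: frankl_family_def\<close>)
next
  fix A assume "A \<in> ?rhs"
  then consider "A \<in> grid r (\<lambda>_. n)" "\<forall>l\<in>D. A l = c l"
    | d where "A \<in> grid r (\<lambda>_. n)" "d \<in> D" "\<forall>l\<in>D - {d}. A l = c l" "A d \<noteq> c d"
    by auto
  then show "A \<in> frankl_family r n c D t"
  proof cases
    case 1
    then have "{l\<in>D. A l = c l} = D" by auto
    then show ?thesis using 1 D by (auto simp: frankl_family_def)
  next
    case 2
    then have "{l\<in>D. A l = c l} = D - {d}" by auto
    then show ?thesis using 2 D by (auto simp: frankl_family_def)
  qed
qed

lemma card_frankl_family:
  assumes c: "c \<in> grid r (\<lambda>_. n)" and D: "D \<subseteq> {..<r}" "card D = t + 2"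
  shows "card (frankl_family r n c D t)
    = n ^ (r - (t + 2)) + (t + 2) * ((n - 1) * n ^ (r - (t + 2)))"
proof -
  have fD: "finite D" using D finite_subset by auto
  define Y0 where "Y0 = {A \<in> grid r (\<lambda>_. n). \<forall>l\<in>D. A l = c l}"
  define Y where "Y d = {A \<in> grid r (\<lambda>_. n). (\<forall>l\<in>D - {d}. A l = c l) \<and> (\<forall>l\<in>{d}. A l \<noteq> c l)}" for d
  have cD: "card ({..<r} - D) = r - (t + 2)" using D fD by (simp add: card_Diff_subset)
  have cY: "card (Y d) = (n - 1) * n ^ (r - (t + 2))" if "d \<in> D" for d
  proof -
    have "{..<r} - (D - {d}) - {d} = {..<r} - D" using that by auto
    then show ?thesis
      unfolding Y_def by (subst card_grid_fix_avoid) (use D c that cD in auto)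
  qed
  have "frankl_family r n c D t = Y0 \<union> (\<Union>d\<in>D. Y d)"
    unfolding Y0_def Y_def by (rule frankl_family_eq_Un[OF fD D(2)])
  then have "card (frankl_family r n c D t) = card Y0 + card (\<Union>d\<in>D. Y d)"
    by (simp only:) (rule card_Un_disjoint, use fD in \<open>auto simp: Y0_def Y_def\<close>)
  moreover have "card (\<Union>d\<in>D. Y d) = (t + 2) * ((n - 1) * n ^ (r - (t + 2)))"
  proof -
    have "card (\<Union>d\<in>D. Y d) = (\<Sum>d\<in>D. card (Y d))"
      by (rule card_UN_disjoint) (use fD in \<open>auto simp: Y_def\<close>)
    then show ?thesis using cY D by simp
  qed
  moreover have "card Y0 = n ^ (r - (t + 2))"
    using card_grid_fix[OF D(1) c] D unfolding Y0_def by simp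
  ultimately show ?thesis by simp
qed

lemma t_intersecting_hilton_milner_family:
  assumes T: "T \<subseteq> {..<r}" "card T = t" and tr: "t + 2 \<le> r"
  shows "t_intersecting r t (hilton_milner_family r n c T)"
  unfolding t_intersecting_def
proof (intro ballI)
  have fT: "finite T" using T finite_subset by auto
  let ?X = "\<lambda>A. (\<forall>l\<in>T. A l = c l) \<and> (\<exists>l\<in>{..<r} - T. A l = c l)"
  let ?Y = "\<lambda>A d. d \<in> T \<and> (\<forall>l\<in>{..<r} - {d}. A l = c l) \<and> A d \<noteq> c d"
  have XY: "t \<le> card (agree r A B)" if A: "?X A" and B: "?Y B d" for A B d
  proof -
    obtain l where l: "l \<in> {..<r} - T" "A l = c l" using A by blast
    then have "B l = c l" using B by auto
    then have "insert l (T - {d}) \<subseteq> agree r A B" using l A B T by (auto simp: agree_def)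
    moreover have "0 < t" using B fT T by (auto simp: card_gt_0_iff)
    then have "card (insert l (T - {d})) = t" using l B fT T by simp
    ultimately show ?thesis using card_le_card_agree by metis
  qed
  have YY: "t \<le> card (agree r A B)" if "?Y A d" "?Y B d'" for A B d d'
  proof -
    have "{..<r} - {d, d'} \<subseteq> agree r A B" using that by (auto simp: agree_def)
    moreover have "card {..<r} - card {d, d'} \<le> card ({..<r} - {d, d'})"
      by (rule diff_card_le_card_Diff) auto
    moreover have "card {d, d'} \<le> 2" by (simp add: card_insert_le_m1)
    ultimately show ?thesis using card_le_card_agree[of "{..<r} - {d, d'}"] tr by fastforce
  qed
  fix A B assume "A \<in> hilton_milner_family r n c T" "B \<in> hilton_milner_family r n c T"
  then consider "?X A" "?X B" | d where "?X A" "?Y B d" | d where "?Y A d" "?X B"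
    | d d' where "?Y A d" "?Y B d'"
    unfolding hilton_milner_family_def by blast
  then show "t \<le> card (agree r A B)"
  proof cases
    case 1
    then have "T \<subseteq> agree r A B" using T by (auto simp: agree_def)
    then show ?thesis using card_le_card_agree T by metis
  next
    case 3
    then show ?thesis using XY[where A = B and B = A] by (simp add: agree_commute)
  qed (use XY YY in blast)+
qed

lemma common_coords_hilton_milner_family:
  assumes T: "T \<subseteq> {..<r}" "card T + 2 \<le> r" and n: "2 \<le> n" and c: "c \<in> grid r (\<lambda>_. n)"
  shows "common_coords r (hilton_milner_family r n c T) = {}"
proof (rule common_coords_eq_empty)
  have fT: "finite T" using T finite_subset by auto
  have off_T: "\<exists>l'\<in>{..<r} - T. l' \<noteq> l" for l
  proof -
    have "1 \<le> card ({..<r} - T - {l})"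
      using T fT by (auto simp: card_Diff_subset card_Diff_singleton_if)
    then have "{..<r} - T - {l} \<noteq> {}" by force
    then show ?thesis by blast
  qed
  then show "c \<in> hilton_milner_family r n c T"
    using c unfolding hilton_milner_family_def by auto
  show "\<forall>l<r. \<exists>A\<in>hilton_milner_family r n c T. A l \<noteq> c l"
  proof (intro allI impI)
    fix l assume l: "l < r"
    obtain v where v: "v < n" "v \<noteq> c l" using ex_less_neq[OF n] by blast
    obtain l' where "l' \<in> {..<r} - T" "l' \<noteq> l" using off_T by blast
    then have "c(l := v) \<in> hilton_milner_family r n c T"
      using grid_fun_upd[OF c l v(1)] v unfolding hilton_milner_family_def by auto
    then show "\<exists>A\<in>hilton_milner_family r n c T. A l \<noteq> c l"
      using v by (intro bexI[where x = "c(l := v)"]) auto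
  qed
qed

lemma t_intersecting_frankl_family:
  assumes D: "D \<subseteq> {..<r}" "card D = t + 2"
  shows "t_intersecting r t (frankl_family r n c D t)"
  unfolding t_intersecting_def
proof (intro ballI)
  fix A B assume A: "A \<in> frankl_family r n c D t" and B: "B \<in> frankl_family r n c D t"
  define EA where "EA = {l\<in>D. A l = c l}"
  define EB where "EB = {l\<in>D. B l = c l}"
  have fD: "finite D" using D finite_subset by auto
  have "t + 1 \<le> card EA" "t + 1 \<le> card EB"
    using A B unfolding frankl_family_def EA_def EB_def by auto
  moreover have "card (EA \<union> EB) \<le> t + 2"
    using D fD card_mono[of D "EA \<union> EB"] unfolding EA_def EB_def by auto
  moreover have "card EA + card EB = card (EA \<union> EB) + card (EA \<inter> EB)"
    using fD unfolding EA_def EB_def by (intro card_Un_Int) auto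
  moreover have "card (EA \<inter> EB) \<le> card (agree r A B)"
    using D by (intro card_le_card_agree) (auto simp: EA_def EB_def agree_def)
  ultimately show "t \<le> card (agree r A B)" by linarith
qed

lemma common_coords_frankl_family:
  assumes D: "D \<subseteq> {..<r}" "card D = t + 2" and n: "2 \<le> n" and c: "c \<in> grid r (\<lambda>_. n)"
  shows "common_coords r (frankl_family r n c D t) = {}"
proof (rule common_coords_eq_empty)
  have fD: "finite D" using D finite_subset by auto
  show "c \<in> frankl_family r n c D t" using c D unfolding frankl_family_def by auto
  show "\<forall>l<r. \<exists>A\<in>frankl_family r n c D t. A l \<noteq> c l"
  proof (intro allI impI)
    fix l assume l: "l < r"
    obtain v where v: "v < n" "v \<noteq> c l" using ex_less_neq[OF n] by blast
    have "card (D - {l}) \<le> card {l'\<in>D. (c(l := v)) l' = c l'}"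
      using fD by (intro card_mono) auto
    moreover have "t + 1 \<le> card (D - {l})" using D fD by (simp add: card_Diff_singleton_if)
    ultimately have "c(l := v) \<in> frankl_family r n c D t"
      using grid_fun_upd[OF c l v(1)] unfolding frankl_family_def by auto
    then show "\<exists>A\<in>frankl_family r n c D t. A l \<noteq> c l"
      using v by (intro bexI[where x = "c(l := v)"]) auto
  qed
qed

lemma nontrivial_hilton_milner_family:
  assumes "T \<subseteq> {..<r}" "card T = t" "1 \<le> t" "t + 2 \<le> r" "2 \<le> n" "c \<in> grid r (\<lambda>_. n)"
  shows "nontrivial_t_intersecting r (\<lambda>_. n) t (hilton_milner_family r n c T)"
  using assms t_intersecting_hilton_milner_family common_coords_hilton_milner_family
  unfolding nontrivial_t_intersecting_def hilton_milner_family_def by auto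

lemma nontrivial_frankl_family:
  assumes "D \<subseteq> {..<r}" "card D = t + 2" "1 \<le> t" "2 \<le> n" "c \<in> grid r (\<lambda>_. n)"
  shows "nontrivial_t_intersecting r (\<lambda>_. n) t (frankl_family r n c D t)"
  using assms t_intersecting_frankl_family common_coords_frankl_family
  unfolding nontrivial_t_intersecting_def frankl_family_def by auto

section \<open>Graphs and fat sets\<close>

definition coord_graph :: "nat \<Rightarrow> (nat \<Rightarrow> nat) \<Rightarrow> (nat \<times> nat) set" where
  "coord_graph r A = (\<lambda>l. (l, A l)) ` {..<r}"

lemma mem_coord_graph [simp]: "(l, v) \<in> coord_graph r A \<longleftrightarrow> l < r \<and> v = A l"
  unfolding coord_graph_def by auto

lemma finite_coord_graph [simp]: "finite (coord_graph r A)"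
  unfolding coord_graph_def by simp

lemma inj_on_fst_coord_graph: "inj_on fst (coord_graph r A)"
  unfolding coord_graph_def by (auto simp: inj_on_def)

lemma card_agree_eq_card_coord_graph_Int:
  "card (agree r A B) = card (coord_graph r A \<inter> coord_graph r B)"
proof -
  have "coord_graph r A \<inter> coord_graph r B = (\<lambda>l. (l, A l)) ` agree r A B"
    unfolding coord_graph_def agree_def by auto
  moreover have "inj_on (\<lambda>l. (l, A l)) (agree r A B)" by (auto simp: inj_on_def)
  ultimately show ?thesis by (simp add: card_image)
qed

lemma card_coord_graph_Int_image:
  assumes "D \<subseteq> {..<r}"
  shows "card (coord_graph r A \<inter> (\<lambda>l. (l, c l)) ` D) = card {l\<in>D. A l = c l}"
proof -
  have "coord_graph r A \<inter> (\<lambda>l. (l, c l)) ` D = (\<lambda>l. (l, c l)) ` {l\<in>D. A l = c l}"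
    using assms by (auto simp: coord_graph_def)
  moreover have "inj_on (\<lambda>l. (l, c l)) {l\<in>D. A l = c l}" by (auto simp: inj_on_def)
  ultimately show ?thesis by (simp add: card_image)
qed

lemma subset_coord_graph_eq_image:
  assumes "Q \<subseteq> coord_graph r A"
  shows "Q = (\<lambda>l. (l, A l)) ` fst ` Q"
  using assms by (force simp: coord_graph_def)

lemma card_fst_image_subset_coord_graph:
  "Q \<subseteq> coord_graph r A \<Longrightarrow> card (fst ` Q) = card Q"
  by (rule card_image[OF inj_on_subset[OF inj_on_fst_coord_graph]])

lemma coord_graph_subset_grid:
  "A \<in> grid r (\<lambda>_. n) \<Longrightarrow> coord_graph r A \<subseteq> {..<r} \<times> {..<n}"
  unfolding coord_graph_def grid_def by auto

lemma ex_grid_point_through: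
  assumes inj: "inj_on fst U" and U: "U \<subseteq> {..<r} \<times> {..<n}" and a: "a \<in> grid r (\<lambda>_. n)"
  obtains c where "c \<in> grid r (\<lambda>_. n)" "U \<subseteq> coord_graph r c"
proof
  define c where "c l = (if l \<in> fst ` U then snd (the_inv_into U fst l) else a l)" for l
  have c_fst: "c (fst x) = snd x" if "x \<in> U" for x
    using that inj by (simp add: c_def the_inv_into_f_f)
  then show "U \<subseteq> coord_graph r c"
    using U by (force simp: coord_graph_def)
  have "c l < n" if "l < r" for l
    using that U a c_fst by (cases "l \<in> fst ` U") (auto simp: c_def grid_def PiE_iff)
  moreover have "c l = undefined" if "l \<notin> {..<r}" for l
  proof -
    have "l \<notin> fst ` U" using that U by auto
    then show ?thesis using that a by (auto simp: c_def grid_def PiE_iff extensional_def)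
  qed
  ultimately show "c \<in> grid r (\<lambda>_. n)" by (auto simp: grid_def PiE_iff extensional_def)
qed

locale t_intersecting_family =
  fixes r n t :: nat and F :: "(nat \<Rightarrow> nat) set"
  assumes family_subset_grid: "F \<subseteq> grid r (\<lambda>_. n)"
    and family_t_intersecting: "t_intersecting r t F"
begin

definition through :: "(nat \<times> nat) set \<Rightarrow> (nat \<Rightarrow> nat) set" where
  "through Q = {A \<in> F. Q \<subseteq> coord_graph r A}"

definition fat :: "(nat \<times> nat) set \<Rightarrow> bool" where
  "fat Q \<longleftrightarrow> (\<forall>g. \<exists>A\<in>through Q. coord_graph r A \<inter> coord_graph r g \<subseteq> Q)"

definition fat_sets :: "(nat \<times> nat) set set" where
  "fat_sets = {Q. card Q = t + 1 \<and> fat Q}"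

lemma finite_family: "finite F"
  using family_subset_grid finite_grid_uniform finite_subset by blast

lemma finite_through: "finite (through Q)"
  unfolding through_def using finite_family by auto

lemma t_le_card_coord_graph_Int:
  "A \<in> F \<Longrightarrow> B \<in> F \<Longrightarrow> t \<le> card (coord_graph r A \<inter> coord_graph r B)"
  using family_t_intersecting by (auto simp: t_intersecting_def card_agree_eq_card_coord_graph_Int)

lemma ex_grid_point_through_pairs:
  assumes "\<forall>x\<in>U. \<forall>y\<in>U. \<exists>A\<in>F. {x, y} \<subseteq> coord_graph r A" "F \<noteq> {}"
  obtains c where "c \<in> grid r (\<lambda>_. n)" "U \<subseteq> coord_graph r c"
proof -
  have "inj_on fst U"
  proof (rule inj_onI)
    fix x y assume "x \<in> U" "y \<in> U" "fst x = fst y"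
    then show "x = y" using assms(1) inj_on_fst_coord_graph by (metis inj_onD insert_subset)
  qed
  moreover have "U \<subseteq> {..<r} \<times> {..<n}"
    using assms(1) family_subset_grid coord_graph_subset_grid by blast
  moreover obtain a where "a \<in> grid r (\<lambda>_. n)" using assms(2) family_subset_grid by blast
  ultimately show ?thesis using ex_grid_point_through that by blast
qed

lemma fat_imp_member: "fat Q \<Longrightarrow> \<exists>A\<in>F. Q \<subseteq> coord_graph r A"
  unfolding fat_def through_def by blast

lemma finite_fat: "fat Q \<Longrightarrow> finite Q"
  using fat_imp_member finite_coord_graph finite_subset by blast

lemma t_le_card_coord_graph_Int_fat:
  assumes "fat Q" "A \<in> F"
  shows "t \<le> card (coord_graph r A \<inter> Q)"
proof -
  obtain B where B: "B \<in> through Q" "coord_graph r B \<inter> coord_graph r A \<subseteq> Q"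
    using assms(1) unfolding fat_def by blast
  then have "coord_graph r A \<inter> coord_graph r B = coord_graph r A \<inter> Q"
    unfolding through_def by auto
  with B(1) assms(2) show ?thesis
    using t_le_card_coord_graph_Int unfolding through_def by fastforce
qed

lemma t_le_card_fat_Int:
  assumes "fat P" "fat Q"
  shows "t \<le> card (P \<inter> Q)"
proof -
  obtain A' where A': "A' \<in> F" "P \<subseteq> coord_graph r A'" using fat_imp_member[OF assms(1)] by blast
  obtain A where A: "A \<in> through Q" "coord_graph r A \<inter> coord_graph r A' \<subseteq> Q"
    using assms(2) unfolding fat_def by blast
  have "t \<le> card (coord_graph r A \<inter> P)"
    using t_le_card_coord_graph_Int_fat[OF assms(1)] A(1) unfolding through_def by auto
  also have "\<dots> \<le> card (P \<inter> Q)"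
    using A A' finite_fat[OF assms(1)] by (intro card_mono) auto
  finally show ?thesis .
qed

lemma card_through_le: "card (through Q) \<le> n ^ (r - card Q)"
proof (cases "through Q = {}")
  case False
  then obtain A0 where A0: "A0 \<in> F" "Q \<subseteq> coord_graph r A0" unfolding through_def by auto
  let ?D = "fst ` Q"
  have D: "?D \<subseteq> {..<r}" "card ?D = card Q"
    using A0(2) card_fst_image_subset_coord_graph by auto
  have "through Q \<subseteq> {A \<in> grid r (\<lambda>_. n). \<forall>l\<in>?D. A l = A0 l}"
    using A0(2) family_subset_grid by (force simp: through_def)
  then have "card (through Q) \<le> card {A \<in> grid r (\<lambda>_. n). \<forall>l\<in>?D. A l = A0 l}"
    by (intro card_mono) auto
  also have "\<dots> = n ^ (r - card Q)"
    using card_grid_fix[OF D(1)] A0(1) family_subset_grid D(2) by auto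
  finally show ?thesis .
qed simp

lemma not_fat_extensions:
  assumes "\<not> fat Q" "finite Q"
  obtains \<X> where "finite \<X>" "card \<X> \<le> r" "\<forall>P\<in>\<X>. card P = card Q + 1"
    "through Q \<subseteq> (\<Union>P\<in>\<X>. through P)"
proof -
  obtain g where g: "\<forall>A\<in>through Q. \<not> coord_graph r A \<inter> coord_graph r g \<subseteq> Q"
    using assms(1) unfolding fat_def by blast
  define L where "L = {l. l < r \<and> (l, g l) \<notin> Q}"
  define \<X> where "\<X> = (\<lambda>l. insert (l, g l) Q) ` L"
  have "L \<subseteq> {..<r}" unfolding L_def by auto
  then have "finite L" "card L \<le> r" using finite_subset card_mono[of "{..<r}" L] by auto
  then have "finite \<X>" "card \<X> \<le> r"
    unfolding \<X>_def using card_image_le[of L "\<lambda>l. insert (l, g l) Q"] by auto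
  moreover have "\<forall>P\<in>\<X>. card P = card Q + 1" using assms(2) unfolding \<X>_def L_def by auto
  moreover have "through Q \<subseteq> (\<Union>P\<in>\<X>. through P)"
  proof
    fix A assume A: "A \<in> through Q"
    then obtain x where x: "x \<in> coord_graph r A" "x \<in> coord_graph r g" "x \<notin> Q" using g by blast
    then obtain l where "x = (l, g l)" "l < r" "A l = g l" by (cases x) auto
    then have "l \<in> L" "A \<in> through (insert (l, g l) Q)"
      using A x(3) unfolding L_def through_def by auto
    then show "A \<in> (\<Union>P\<in>\<X>. through P)" unfolding \<X>_def by blast
  qed
  ultimately show ?thesis by (rule that)
qed

lemma card_through_not_fat_le:
  assumes "\<not> fat Q" "finite Q"
  shows "card (through Q) \<le> r * n ^ (r - card Q - 1)"
proof -
  obtain \<X> where \<X>: "finite \<X>" "card \<X> \<le> r" "\<forall>P\<in>\<X>. card P = card Q + 1"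
      "through Q \<subseteq> (\<Union>P\<in>\<X>. through P)"
    using not_fat_extensions[OF assms] by blast
  have "card (through Q) \<le> card (\<Union>P\<in>\<X>. through P)"
    using \<X>(1,4) by (intro card_mono) (auto simp: finite_through)
  also have "\<dots> \<le> card \<X> * n ^ (r - card Q - 1)"
  proof (rule card_UN_le_mult[OF \<X>(1)])
    fix P assume "P \<in> \<X>"
    then show "card (through P) \<le> n ^ (r - card Q - 1)"
      using \<X>(3) card_through_le[of P] by simp
  qed
  also have "\<dots> \<le> r * n ^ (r - card Q - 1)" using \<X>(2) by (rule mult_right_mono) simp
  finally show ?thesis .
qed

lemma card_le_card_common_coords:
  assumes "Q \<subseteq> coord_graph r A0" "\<forall>A\<in>F. Q \<subseteq> coord_graph r A"
  shows "card Q \<le> card (common_coords r F)"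
proof -
  have "fst ` Q \<subseteq> common_coords r F"
  proof
    fix l assume "l \<in> fst ` Q"
    then obtain v where "(l, v) \<in> Q" by force
    then have "(l, v) \<in> coord_graph r A" if "A \<in> F" for A using assms(2) that by blast
    then have "\<forall>A\<in>F. A l = v" by simp
    moreover have "l < r" using \<open>(l, v) \<in> Q\<close> assms(1) by auto
    ultimately show "l \<in> common_coords r F" unfolding common_coords_def by (simp (no_asm_use)) metis
  qed
  then have "card (fst ` Q) \<le> card (common_coords r F)"
    by (intro card_mono) (auto simp: common_coords_def)
  then show ?thesis using card_fst_image_subset_coord_graph[OF assms(1)] by simp
qed

lemma fat_card_eq_imp_common_coords:
  assumes "fat S" "card S = t"
  shows "t \<le> card (common_coords r F)"
proof -
  obtain A0 where A0: "A0 \<in> F" "S \<subseteq> coord_graph r A0" using fat_imp_member[OF assms(1)] by blast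
  have "S \<subseteq> coord_graph r A" if "A \<in> F" for A
  proof -
    have "coord_graph r A \<inter> S = S"
      using t_le_card_coord_graph_Int_fat[OF assms(1) that] finite_fat[OF assms(1)] assms(2)
      by (metis Int_lower2 card_seteq)
    then show ?thesis by blast
  qed
  then show ?thesis using card_le_card_common_coords[OF A0(2)] assms(2) by simp
qed

lemma finite_fat_sets: "finite fat_sets"
proof (rule finite_subset)
  show "fat_sets \<subseteq> Pow ({..<r} \<times> {..<n})"
    using fat_imp_member family_subset_grid coord_graph_subset_grid
    unfolding fat_sets_def by blast
qed simp

lemma fat_setsD:
  assumes "Q \<in> fat_sets"
  shows "card Q = t + 1" "fat Q" "finite Q"
  using assms finite_fat unfolding fat_sets_def by auto

lemma card_Int_fat_sets:
  assumes "Q1 \<in> fat_sets" "Q2 \<in> fat_sets" "Q1 \<noteq> Q2"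
  shows "card (Q1 \<inter> Q2) = t"
proof -
  have "t \<le> card (Q1 \<inter> Q2)" using t_le_card_fat_Int fat_setsD assms by blast
  moreover have "card (Q1 \<inter> Q2) < card Q1"
    using assms fat_setsD by (metis Int_lower1 card_subset_eq inf.absorb_iff1 inf_commute
        order_less_le card_mono)
  ultimately show ?thesis using fat_setsD(1)[OF assms(1)] by simp
qed

lemma fat_set_eq_insert:
  assumes "Q \<in> fat_sets" "S \<subseteq> Q" "card S = t"
  obtains z where "Q = insert z S" "z \<notin> S"
proof -
  have "card (Q - S) = 1"
    using assms fat_setsD[OF assms(1)] by (simp add: card_Diff_subset finite_subset)
  then obtain z where "Q - S = {z}" by (rule card_1_singletonE)
  then show ?thesis using that assms(2) by blast
qed

section \<open>Configurations of fat (t+1)-sets\<close>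

lemma fat_sets_triangle:
  assumes Q: "Q1 \<in> fat_sets" "Q2 \<in> fat_sets" "Q3 \<in> fat_sets" "Q1 \<noteq> Q2" "\<not> Q1 \<inter> Q2 \<subseteq> Q3"
  obtains U p1 p2 s where "finite U" "card U = t + 2" "{p1, p2, s} \<subseteq> U"
    "p1 \<noteq> p2" "p1 \<noteq> s" "p2 \<noteq> s" "Q1 = U - {p2}" "Q2 = U - {p1}" "Q3 = U - {s}"
proof -
  define S where "S = Q1 \<inter> Q2"
  have cS: "card S = t" unfolding S_def using card_Int_fat_sets Q by blast
  have fS: "finite S" using fat_setsD(3)[OF Q(1)] S_def by auto
  obtain p1 where p1: "Q1 = insert p1 S" "p1 \<notin> S"
    using fat_set_eq_insert[OF Q(1) _ cS] S_def by blast
  obtain p2 where p2: "Q2 = insert p2 S" "p2 \<notin> S"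
    using fat_set_eq_insert[OF Q(2) _ cS] S_def by blast
  obtain s where s: "s \<in> S" "s \<notin> Q3" using Q(5) S_def by auto
  have "p1 \<noteq> p2" using p1 p2 Q(4) by auto
  have Diff_s: "Qi - {s} \<subseteq> Q3" if "Qi \<in> fat_sets" "s \<in> Qi" for Qi
  proof -
    have "card (Qi \<inter> Q3) = t" using card_Int_fat_sets that Q(3) s by blast
    moreover have "Qi \<inter> Q3 \<subseteq> Qi - {s}" "card (Qi - {s}) = t" "finite (Qi - {s})"
      using fat_setsD[OF that(1)] that(2) s by auto
    ultimately have "Qi \<inter> Q3 = Qi - {s}" by (intro card_seteq) auto
    then show ?thesis by blast
  qed
  define U where "U = insert p1 (insert p2 S)"
  have fU: "finite U" and cU: "card U = t + 2"
    unfolding U_def using p1 p2 \<open>p1 \<noteq> p2\<close> fS cS by auto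
  have "U - {s} \<subseteq> Q3"
    using Diff_s[OF Q(1)] Diff_s[OF Q(2)] s p1 p2 unfolding U_def S_def by blast
  moreover have "card (U - {s}) = t + 1" using cU s fU unfolding U_def by simp
  ultimately have "Q3 = U - {s}" using fat_setsD[OF Q(3)] by (intro card_seteq[symmetric]) auto
  moreover have "Q1 = U - {p2}" "Q2 = U - {p1}" using p1 p2 \<open>p1 \<noteq> p2\<close> unfolding U_def by auto
  moreover have "{p1, p2, s} \<subseteq> U" "p1 \<noteq> s" "p2 \<noteq> s" using s p1 p2 unfolding U_def by auto
  ultimately show ?thesis using that[OF fU cU _ \<open>p1 \<noteq> p2\<close>] by blast
qed

text \<open>A member meeting U in at most t points would miss one of the fat sets U - {p}.\<close>

lemma t_plus_one_le_card_coord_graph_Int: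
  assumes U: "finite U" "card U = t + 2" and P: "P \<subseteq> U" "card P = 3"
    and fat: "\<forall>p\<in>P. fat (U - {p})" and A: "A \<in> F"
  shows "t + 1 \<le> card (coord_graph r A \<inter> U)"
proof (rule card_ge_if_card_Diff_singleton_ge[OF U _ P])
  show "\<forall>p\<in>P. t \<le> card (coord_graph r A \<inter> U - {p})"
    using fat t_le_card_coord_graph_Int_fat[OF _ A] by (simp add: Int_Diff)
qed auto

lemma card_le_frankl_bound:
  assumes "Q1 \<in> fat_sets" "Q2 \<in> fat_sets" "Q3 \<in> fat_sets" "Q1 \<noteq> Q2" "\<not> Q1 \<inter> Q2 \<subseteq> Q3"
  shows "card F \<le> n ^ (r - (t + 2)) + (t + 2) * ((n - 1) * n ^ (r - (t + 2)))"
proof -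
  obtain U p1 p2 s where U: "finite U" "card U = t + 2" "{p1, p2, s} \<subseteq> U"
      and distinct: "p1 \<noteq> p2" "p1 \<noteq> s" "p2 \<noteq> s"
      and Q: "Q1 = U - {p2}" "Q2 = U - {p1}" "Q3 = U - {s}"
    using fat_sets_triangle[OF assms] .
  have "U - {p2} \<in> fat_sets" "U - {p1} \<in> fat_sets" "U - {s} \<in> fat_sets"
    using assms(1-3) unfolding Q .
  then have fat: "fat (U - {p})" if "p \<in> {p1, p2, s}" for p
    using that fat_setsD(2) by blast
  have "card {p1, p2, s} = 3" using distinct by simp
  then have meet: "t + 1 \<le> card (coord_graph r A \<inter> U)" if "A \<in> F" for A
    using t_plus_one_le_card_coord_graph_Int[OF U(1-3)] fat that by blast
  have pairs: "\<forall>x\<in>U. \<forall>y\<in>U. \<exists>A\<in>F. {x, y} \<subseteq> coord_graph r A"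
  proof (intro ballI)
    fix x y assume "x \<in> U" "y \<in> U"
    have "\<exists>p\<in>{p1, p2, s}. x \<noteq> p \<and> y \<noteq> p" using distinct by auto
    then obtain p where p: "p \<in> {p1, p2, s}" "x \<noteq> p" "y \<noteq> p" by blast
    obtain A where "A \<in> F" "U - {p} \<subseteq> coord_graph r A"
      using fat_imp_member[OF fat[OF p(1)]] by blast
    then show "\<exists>A\<in>F. {x, y} \<subseteq> coord_graph r A" using p(2,3) \<open>x \<in> U\<close> \<open>y \<in> U\<close> by blast
  qed
  have "F \<noteq> {}" using fat[of p1] fat_imp_member by blast
  then obtain c where c: "c \<in> grid r (\<lambda>_. n)" "U \<subseteq> coord_graph r c"
    using ex_grid_point_through_pairs[OF pairs] by blast
  define D where "D = fst ` U"
  have D: "D \<subseteq> {..<r}" "card D = t + 2"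
    using c(2) card_fst_image_subset_coord_graph[OF c(2)] U(2)
    unfolding D_def coord_graph_def by auto
  have U_eq: "U = (\<lambda>l. (l, c l)) ` D"
    using subset_coord_graph_eq_image[OF c(2)] unfolding D_def .
  have "F \<subseteq> frankl_family r n c D t"
  proof
    fix A assume A: "A \<in> F"
    have "card {l\<in>D. A l = c l} = card (coord_graph r A \<inter> U)"
      using card_coord_graph_Int_image[OF D(1)] U_eq by simp
    then show "A \<in> frankl_family r n c D t"
      using meet[OF A] A family_subset_grid by (auto simp: frankl_family_def)
  qed
  then have "card F \<le> card (frankl_family r n c D t)"
    by (intro card_mono) (auto simp: frankl_family_def)
  then show ?thesis using card_frankl_family[OF c(1) D] by simp
qed

lemma fat_sets_sunflower_kernel:
  assumes "2 \<le> card fat_sets"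
    and sunflower: "\<forall>Q1\<in>fat_sets. \<forall>Q2\<in>fat_sets. \<forall>Q3\<in>fat_sets. Q1 \<noteq> Q2 \<longrightarrow> Q1 \<inter> Q2 \<subseteq> Q3"
  obtains S where "card S = t" "\<forall>Q\<in>fat_sets. S \<subseteq> Q"
proof -
  have "\<not> card fat_sets \<le> Suc 0" using assms(1) by simp
  then obtain Q1 Q2 where "Q1 \<in> fat_sets" "Q2 \<in> fat_sets" "Q1 \<noteq> Q2"
    using card_le_Suc0_iff_eq[OF finite_fat_sets] by blast
  then show ?thesis using that[of "Q1 \<inter> Q2"] card_Int_fat_sets sunflower by blast
qed

lemma petal_subset_member:
  assumes "Q \<in> fat_sets" "S \<subseteq> Q" "card S = t" "A \<in> F" "\<not> S \<subseteq> coord_graph r A"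
  shows "Q - S \<subseteq> coord_graph r A" "Suc (card (coord_graph r A \<inter> S)) = t"
proof -
  obtain z where z: "Q = insert z S" "z \<notin> S" using fat_set_eq_insert assms(1-3) by blast
  have fS: "finite S" using fat_setsD(3)[OF assms(1)] assms(2) finite_subset by blast
  have "coord_graph r A \<inter> S \<subset> S" using assms(5) by blast
  then have lt: "card (coord_graph r A \<inter> S) < t" using psubset_card_mono fS assms(3) by metis
  have ge: "t \<le> card (coord_graph r A \<inter> Q)"
    using t_le_card_coord_graph_Int_fat fat_setsD(2) assms(1,4) by blast
  have "z \<in> coord_graph r A"
  proof (rule ccontr)
    assume "z \<notin> coord_graph r A"
    then have "coord_graph r A \<inter> Q = coord_graph r A \<inter> S" using z by auto
    then show False using ge lt by simp
  qed
  then have "coord_graph r A \<inter> Q = insert z (coord_graph r A \<inter> S)" using z by auto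
  then have "card (coord_graph r A \<inter> Q) = Suc (card (coord_graph r A \<inter> S))" using z fS by simp
  then show "Suc (card (coord_graph r A \<inter> S)) = t" using ge lt by simp
  show "Q - S \<subseteq> coord_graph r A" using z \<open>z \<in> coord_graph r A\<close> by auto
qed

lemma ex_grid_point_through_sunflower:
  assumes S: "card S = t" "\<forall>Q\<in>fat_sets. S \<subseteq> Q" and Q0: "Q0 \<in> fat_sets"
    and B: "B \<in> F" "\<not> S \<subseteq> coord_graph r B"
  obtains c where "c \<in> grid r (\<lambda>_. n)" "S \<union> (\<Union>Q\<in>fat_sets. Q - S) \<subseteq> coord_graph r c"
proof -
  define Z where "Z = (\<Union>Q\<in>fat_sets. Q - S)"
  obtain A0 where A0: "A0 \<in> F" "S \<subseteq> coord_graph r A0"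
    using fat_imp_member[OF fat_setsD(2)[OF Q0]] S(2) Q0 by blast
  have Z_B: "Z \<subseteq> coord_graph r B"
    using petal_subset_member(1)[OF _ _ S(1) B] S(2) unfolding Z_def by blast
  have mixed: "\<exists>A\<in>F. {x, y} \<subseteq> coord_graph r A" if "x \<in> S" "y \<in> Z" for x y
  proof -
    obtain Q where Q: "Q \<in> fat_sets" "y \<in> Q" using \<open>y \<in> Z\<close> unfolding Z_def by blast
    obtain A where "A \<in> F" "Q \<subseteq> coord_graph r A"
      using fat_imp_member[OF fat_setsD(2)[OF Q(1)]] by blast
    then show ?thesis using Q S(2) \<open>x \<in> S\<close> by blast
  qed
  have pairs: "\<forall>x\<in>S \<union> Z. \<forall>y\<in>S \<union> Z. \<exists>A\<in>F. {x, y} \<subseteq> coord_graph r A"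
  proof (intro ballI)
    fix x y assume xy: "x \<in> S \<union> Z" "y \<in> S \<union> Z"
    show "\<exists>A\<in>F. {x, y} \<subseteq> coord_graph r A"
      by (cases "x \<in> S"; cases "y \<in> S")
        (use xy A0 B Z_B mixed[of x y] mixed[of y x] in \<open>auto simp: insert_commute\<close>)
  qed
  have "F \<noteq> {}" using B(1) by blast
  then obtain c where "c \<in> grid r (\<lambda>_. n)" "S \<union> Z \<subseteq> coord_graph r c"
    using ex_grid_point_through_pairs[OF pairs] by blast
  then show ?thesis using that unfolding Z_def by blast
qed

text \<open>The petals lie on one graph and are at least r - t in number, so they fill the r - t
  coordinates outside the kernel.\<close>

lemma fst_petals_eq:
  assumes S: "card S = t" "\<forall>Q\<in>fat_sets. S \<subseteq> Q" and many: "r - t \<le> card fat_sets"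
    and c: "S \<union> (\<Union>Q\<in>fat_sets. Q - S) \<subseteq> coord_graph r c"
  shows "fst ` (\<Union>Q\<in>fat_sets. Q - S) = {..<r} - fst ` S"
proof -
  define Z where "Z = (\<Union>Q\<in>fat_sets. Q - S)"
  have Z_c: "Z \<subseteq> coord_graph r c" and S_c: "S \<subseteq> coord_graph r c" using c unfolding Z_def by auto
  have fZ: "finite Z" by (rule finite_subset[OF Z_c finite_coord_graph])
  have T: "fst ` S \<subseteq> {..<r}" "card (fst ` S) = t"
    using S_c S(1) card_fst_image_subset_coord_graph[OF S_c] by auto
  have "fst ` Z = {..<r} - fst ` S"
  proof (rule card_seteq)
    have "fst z \<notin> fst ` S" if "z \<in> Z" for z
    proof
      assume "fst z \<in> fst ` S"
      then obtain x where "fst z = fst x" "x \<in> S" by (rule imageE)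
      moreover have "x \<in> coord_graph r c" "z \<in> coord_graph r c" using S_c Z_c \<open>x \<in> S\<close> that by auto
      ultimately have "x = z" using inj_onD[OF inj_on_fst_coord_graph] by metis
      then show False using \<open>x \<in> S\<close> that unfolding Z_def by blast
    qed
    then show "fst ` Z \<subseteq> {..<r} - fst ` S" using Z_c by force
    have "fat_sets \<subseteq> (\<lambda>z. insert z S) ` Z"
    proof
      fix Q assume "Q \<in> fat_sets"
      then obtain z where "Q = insert z S" "z \<notin> S"
        using fat_set_eq_insert[OF \<open>Q \<in> fat_sets\<close> _ S(1)] S(2) by blast
      then show "Q \<in> (\<lambda>z. insert z S) ` Z" using \<open>Q \<in> fat_sets\<close> unfolding Z_def by blast
    qed
    then have "card fat_sets \<le> card ((\<lambda>z. insert z S) ` Z)" using fZ by (intro card_mono) auto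
    also have "\<dots> \<le> card Z" by (rule card_image_le[OF fZ])
    finally show "card ({..<r} - fst ` S) \<le> card (fst ` Z)"
      using many T card_fst_image_subset_coord_graph[OF Z_c]
      by (simp add: card_Diff_subset finite_subset)
  qed simp
  then show ?thesis unfolding Z_def .
qed

lemma subset_hilton_milner_family:
  assumes S: "S = (\<lambda>l. (l, c l)) ` T" and T: "T \<subseteq> {..<r}" "card T = t"
    and B: "B \<in> F" "\<not> S \<subseteq> coord_graph r B"
    and missing: "\<And>A. A \<in> F \<Longrightarrow> \<not> S \<subseteq> coord_graph r A \<Longrightarrow>
      (\<forall>l\<in>{..<r} - T. A l = c l) \<and> Suc (card (coord_graph r A \<inter> S)) = t"
  shows "F \<subseteq> hilton_milner_family r n c T"
proof
  fix A assume A: "A \<in> F"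
  have fT: "finite T" using T finite_subset by blast
  have card_S: "card (coord_graph r A' \<inter> S) = card {l\<in>T. A' l = c l}" for A'
    using card_coord_graph_Int_image[OF T(1)] S by simp
  show "A \<in> hilton_milner_family r n c T"
  proof (cases "S \<subseteq> coord_graph r A")
    case True
    then have on_T: "\<forall>l\<in>T. A l = c l" using S by auto
    have "\<exists>l\<in>{..<r} - T. A l = c l"
    proof (rule ccontr)
      assume off_T: "\<not> (\<exists>l\<in>{..<r} - T. A l = c l)"
      have "coord_graph r A \<inter> coord_graph r B \<subseteq> coord_graph r B \<inter> S"
      proof
        fix x assume x: "x \<in> coord_graph r A \<inter> coord_graph r B"
        then obtain l where l: "x = (l, A l)" "l < r" "A l = B l" by (auto simp: coord_graph_def)
        then have "l \<in> T" using off_T missing[OF B] by (metis DiffI lessThan_iff)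
        then show "x \<in> coord_graph r B \<inter> S" using x l on_T S by auto
      qed
      then have "card (coord_graph r A \<inter> coord_graph r B) \<le> card (coord_graph r B \<inter> S)"
        by (intro card_mono) auto
      then show False using missing[OF B] t_le_card_coord_graph_Int[OF A B(1)] by simp
    qed
    then show ?thesis
      using on_T A family_subset_grid by (auto simp: hilton_milner_family_def)
  next
    case False
    define E where "E = {l\<in>T. A l = c l}"
    have "card (T - E) = 1"
      using missing[OF A False] card_S[of A] T fT by (auto simp: E_def card_Diff_subset)
    then obtain d where d: "T - E = {d}" by (rule card_1_singletonE)
    then have "d \<in> T" "A d \<noteq> c d" "\<forall>l\<in>{..<r} - {d}. A l = c l"
      using missing[OF A False] unfolding E_def by auto
    then show ?thesis
      using A family_subset_grid by (auto simp: hilton_milner_family_def)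
  qed
qed

end

section \<open>The upper bound\<close>

lemma power_diff_one_le:
  fixes n :: int
  assumes "1 \<le> n"
  shows "(n - 1) ^ (k + 2) \<le> n ^ (k + 2) - (int k + 2) * n ^ (k + 1) + (int k + 2)^2 * n ^ k"
proof (induction k)
  case 0
  then show ?case by (simp add: power2_eq_square algebra_simps)
next
  case (Suc k)
  define p where "p = n ^ k"
  have p0: "0 \<le> p" using assms unfolding p_def by simp
  have IH: "(n - 1) ^ (k + 2) \<le> n * n * p - (int k + 2) * n * p + (int k + 2)^2 * p"
    using Suc.IH unfolding p_def by (simp add: power_add power2_eq_square algebra_simps)
  have "(n - 1) ^ (Suc k + 2) = (n - 1) * (n - 1) ^ (k + 2)" by simp
  also have "\<dots> \<le> (n - 1) * (n * n * p - (int k + 2) * n * p + (int k + 2)^2 * p)"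
    using IH assms by (intro mult_left_mono) auto
  also have "\<dots> \<le> n * n * n * p - (int k + 3) * n * n * p + (int k + 3)^2 * n * p"
  proof -
    have "n * n * n * p - (int k + 3) * n * n * p + (int k + 3)^2 * n * p
        - (n - 1) * (n * n * p - (int k + 2) * n * p + (int k + 2)^2 * p)
        = (int k + 3) * (n * p) + (int k + 2)^2 * p"
      by (simp add: power2_eq_square algebra_simps)
    moreover have "0 \<le> (int k + 3) * (n * p) + (int k + 2)^2 * p" using p0 assms by simp
    ultimately show ?thesis by linarith
  qed
  also have "\<dots> = n ^ (Suc k + 2) - (int (Suc k) + 2) * n ^ (Suc k + 1)
      + (int (Suc k) + 2)^2 * n ^ Suc k"
    unfolding p_def by (simp add: power_add power2_eq_square algebra_simps)
  finally show ?case .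
qed

lemma power_diff_power_diff_one_ge:
  fixes n K m :: nat
  assumes m: "2 \<le> m" and n: "K + m^2 \<le> n"
  shows "(m - 1) * n ^ (m - 1) + K * n ^ (m - 2) \<le> n ^ m - (n - 1) ^ m"
proof -
  obtain k where k: "m = k + 2" using m by (metis add.commute le_Suc_ex)
  have "1 \<le> m^2" using m by simp
  then have n1: "1 \<le> n" using n by linarith
  define p where "p = int n ^ k"
  have p0: "0 \<le> p" unfolding p_def by simp
  have bound:
    "(int n - 1) ^ (k + 2) \<le> int n * int n * p - (int k + 2) * int n * p + (int k + 2)^2 * p"
    using power_diff_one_le[of "int n" k] n1 unfolding p_def
    by (simp add: power_add power2_eq_square algebra_simps)
  have n': "int K + (int k + 2)^2 \<le> int n"
    using n k by (metis of_nat_add of_nat_le_iff of_nat_numeral of_nat_power)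
  have "(int k + 1) * (int n * p) + int K * p \<le> (int k + 2) * int n * p - (int k + 2)^2 * p"
  proof -
    have "(int k + 2) * int n * p - (int k + 2)^2 * p - ((int k + 1) * (int n * p) + int K * p)
        = (int n - int K - (int k + 2)^2) * p" by (simp add: algebra_simps power2_eq_square)
    moreover have "0 \<le> (int n - int K - (int k + 2)^2) * p" using n' p0 by simp
    ultimately show ?thesis by linarith
  qed
  also have "\<dots> \<le> int n * int n * p - (int n - 1) ^ (k + 2)" using bound by linarith
  finally have "(int k + 1) * (int n * p) + int K * p \<le> int n * int n * p - (int n - 1) ^ (k + 2)" .
  moreover have
    "int ((m - 1) * n ^ (m - 1) + K * n ^ (m - 2)) = (int k + 1) * (int n * p) + int K * p"
    unfolding p_def k by (simp add: algebra_simps)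
  moreover have "int (n ^ m - (n - 1) ^ m) = int n * int n * p - (int n - 1) ^ (k + 2)"
    using n1 power_mono[of "n - 1" n m] unfolding p_def k
    by (simp add: of_nat_diff power_add power2_eq_square)
  ultimately show ?thesis by linarith
qed

locale nontrivial_t_intersecting_family = t_intersecting_family +
  assumes nontrivial: "card (common_coords r F) < t"
begin

lemma not_fat_of_card_eq: "card S = t \<Longrightarrow> \<not> fat S"
  using fat_card_eq_imp_common_coords nontrivial by fastforce

lemma cover_by_through:
  obtains \<N> where "finite \<N>" "card \<N> \<le> 2 ^ r * r" "\<forall>Q\<in>\<N>. card Q = t + 1 \<and> \<not> fat Q"
    "F \<subseteq> (\<Union>Q\<in>fat_sets. through Q) \<union> (\<Union>Q\<in>\<N>. through Q)"
proof (cases "F = {}")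
  case False
  then obtain B0 where B0: "B0 \<in> F" by auto
  define Ts where "Ts = {T. T \<subseteq> {..<r} \<and> card T = t}"
  define S where "S T = (\<lambda>l. (l, B0 l)) ` T" for T
  have S_graph: "S T \<subseteq> coord_graph r B0" if "T \<in> Ts" for T
    using that by (auto simp: S_def Ts_def)
  have card_S: "card (S T) = t" if "T \<in> Ts" for T
    using card_fst_image_subset_coord_graph[OF S_graph[OF that]] that
    by (simp add: S_def Ts_def image_image)
  have "\<forall>T\<in>Ts. \<exists>\<X>. finite \<X> \<and> card \<X> \<le> r \<and> (\<forall>P\<in>\<X>. card P = t + 1)
      \<and> through (S T) \<subseteq> (\<Union>P\<in>\<X>. through P)"
  proof
    fix T assume T: "T \<in> Ts"
    have "finite (S T)" by (rule finite_subset[OF S_graph[OF T] finite_coord_graph])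
    with not_fat_of_card_eq[OF card_S[OF T]] obtain \<X> where "finite \<X>" "card \<X> \<le> r"
        "\<forall>P\<in>\<X>. card P = card (S T) + 1" "through (S T) \<subseteq> (\<Union>P\<in>\<X>. through P)"
      by (rule not_fat_extensions)
    then show "\<exists>\<X>. finite \<X> \<and> card \<X> \<le> r \<and> (\<forall>P\<in>\<X>. card P = t + 1)
        \<and> through (S T) \<subseteq> (\<Union>P\<in>\<X>. through P)"
      using card_S[OF T] by auto
  qed
  from bchoice[OF this] obtain X where X: "\<forall>T\<in>Ts. finite (X T) \<and> card (X T) \<le> r
      \<and> (\<forall>P\<in>X T. card P = t + 1) \<and> through (S T) \<subseteq> (\<Union>P\<in>X T. through P)"
    by blast
  define \<N> where "\<N> = {P \<in> (\<Union>T\<in>Ts. X T). \<not> fat P}"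
  have finTs: "finite Ts" unfolding Ts_def by auto
  have fin_X: "finite (\<Union>T\<in>Ts. X T)" using X by (intro finite_UN_I finTs) blast
  have "card \<N> \<le> card (\<Union>T\<in>Ts. X T)" unfolding \<N>_def using fin_X by (intro card_mono) auto
  also have "\<dots> \<le> card Ts * r" by (rule card_UN_le_mult[OF finTs]) (use X in blast)
  also have "\<dots> \<le> 2 ^ r * r"
  proof -
    have "card Ts \<le> card (Pow {..<r})" by (rule card_mono) (auto simp: Ts_def)
    then show ?thesis by (simp add: card_Pow)
  qed
  finally have card_\<N>: "card \<N> \<le> 2 ^ r * r" .
  have fin_\<N>: "finite \<N>" using fin_X by (rule rev_finite_subset) (auto simp: \<N>_def)
  have \<N>: "\<forall>Q\<in>\<N>. card Q = t + 1 \<and> \<not> fat Q" unfolding \<N>_def using X by blast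
  have "F \<subseteq> (\<Union>Q\<in>fat_sets. through Q) \<union> (\<Union>Q\<in>\<N>. through Q)"
  proof
    fix A assume A: "A \<in> F"
    have "t \<le> card (agree r A B0)"
      using family_t_intersecting A B0 unfolding t_intersecting_def by auto
    then obtain T where T: "T \<subseteq> agree r A B0" "card T = t" by (meson obtain_subset_with_card_n)
    then have "T \<in> Ts" "A \<in> through (S T)"
      using A unfolding Ts_def S_def agree_def through_def by auto
    then obtain P where "P \<in> X T" "A \<in> through P" using X by blast
    moreover have "card P = t + 1" using X \<open>T \<in> Ts\<close> \<open>P \<in> X T\<close> by blast
    ultimately show "A \<in> (\<Union>Q\<in>fat_sets. through Q) \<union> (\<Union>Q\<in>\<N>. through Q)"
      using \<open>T \<in> Ts\<close> unfolding fat_sets_def \<N>_def by blast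
  qed
  then show ?thesis by (rule that[OF fin_\<N> card_\<N> \<N>])
qed (use that[of "{}"] in auto)

lemma card_le_few_fat_sets:
  "card F \<le> card fat_sets * n ^ (r - t - 1) + 2 ^ r * r * (r * n ^ (r - t - 2))"
proof -
  obtain \<N> where \<N>: "finite \<N>" "card \<N> \<le> 2 ^ r * r" "\<forall>Q\<in>\<N>. card Q = t + 1 \<and> \<not> fat Q"
      and cover: "F \<subseteq> (\<Union>Q\<in>fat_sets. through Q) \<union> (\<Union>Q\<in>\<N>. through Q)"
    using cover_by_through by blast
  have "card F \<le> card ((\<Union>Q\<in>fat_sets. through Q) \<union> (\<Union>Q\<in>\<N>. through Q))"
    using cover \<N>(1) by (intro card_mono) (auto simp: finite_fat_sets finite_through)
  also have "\<dots> \<le> card (\<Union>Q\<in>fat_sets. through Q) + card (\<Union>Q\<in>\<N>. through Q)"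
    by (rule card_Un_le)
  also have "card (\<Union>Q\<in>fat_sets. through Q) \<le> card fat_sets * n ^ (r - t - 1)"
  proof (rule card_UN_le_mult[OF finite_fat_sets])
    fix Q assume "Q \<in> fat_sets"
    then show "card (through Q) \<le> n ^ (r - t - 1)"
      using card_through_le[of Q] fat_setsD(1) by simp
  qed
  also have "card (\<Union>Q\<in>\<N>. through Q) \<le> card \<N> * (r * n ^ (r - t - 2))"
  proof (rule card_UN_le_mult[OF \<N>(1)])
    fix Q assume "Q \<in> \<N>"
    then have "card Q = t + 1" "\<not> fat Q" using \<N>(3) by auto
    moreover have "finite Q" using \<open>card Q = t + 1\<close> card_ge_0_finite by force
    ultimately show "card (through Q) \<le> r * n ^ (r - t - 2)"
      using card_through_not_fat_le[of Q] by simp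
  qed
  also have "\<dots> \<le> 2 ^ r * r * (r * n ^ (r - t - 2))"
    using \<N>(2) by (rule mult_right_mono) simp
  finally show ?thesis by simp
qed

lemma card_le_hilton_milner_bound:
  assumes "2 \<le> card fat_sets" "r - t \<le> card fat_sets"
    and sunflower: "\<forall>Q1\<in>fat_sets. \<forall>Q2\<in>fat_sets. \<forall>Q3\<in>fat_sets. Q1 \<noteq> Q2 \<longrightarrow> Q1 \<inter> Q2 \<subseteq> Q3"
  shows "card F \<le> n ^ (r - t) - (n - 1) ^ (r - t) + t * (n - 1)"
proof -
  obtain S where S: "card S = t" "\<forall>Q\<in>fat_sets. S \<subseteq> Q"
    using fat_sets_sunflower_kernel[OF assms(1) sunflower] by blast
  have "fat_sets \<noteq> {}" using assms(1) by auto
  then obtain Q0 where Q0: "Q0 \<in> fat_sets" by blast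
  obtain A0 where A0: "A0 \<in> F" "S \<subseteq> coord_graph r A0"
    using fat_imp_member[OF fat_setsD(2)[OF Q0]] S(2) Q0 by blast
  have "\<not> (\<forall>A\<in>F. S \<subseteq> coord_graph r A)"
    using card_le_card_common_coords[OF A0(2)] nontrivial S(1) by auto
  then obtain B where B: "B \<in> F" "\<not> S \<subseteq> coord_graph r B" by blast
  define Z where "Z = (\<Union>Q\<in>fat_sets. Q - S)"
  obtain c where c: "c \<in> grid r (\<lambda>_. n)" "S \<union> Z \<subseteq> coord_graph r c"
    using ex_grid_point_through_sunflower[OF S Q0 B] unfolding Z_def by blast
  define T where "T = fst ` S"
  have T: "T \<subseteq> {..<r}" "card T = t"
    using c(2) S(1) card_fst_image_subset_coord_graph[of S r c] unfolding T_def by auto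
  have S_eq: "S = (\<lambda>l. (l, c l)) ` T"
    using subset_coord_graph_eq_image[of S r c] c(2) unfolding T_def by blast
  have fst_Z: "fst ` Z = {..<r} - T"
    using c(2) unfolding Z_def T_def by (rule fst_petals_eq[OF S assms(2)])
  have off_T: "\<forall>l\<in>{..<r} - T. A l = c l" if "A \<in> F" "\<not> S \<subseteq> coord_graph r A" for A
  proof
    fix l assume "l \<in> {..<r} - T"
    then have "l \<in> fst ` Z" using fst_Z by simp
    then obtain z where "l = fst z" "z \<in> Z" by (rule imageE)
    moreover have "z \<in> coord_graph r A" "z \<in> coord_graph r c"
      using petal_subset_member(1)[OF _ _ S(1) that] S(2) c(2) \<open>z \<in> Z\<close> unfolding Z_def by auto
    ultimately show "A l = c l" by (cases z) auto
  qed
  have "(\<forall>l\<in>{..<r} - T. A l = c l) \<and> Suc (card (coord_graph r A \<inter> S)) = t"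
    if "A \<in> F" "\<not> S \<subseteq> coord_graph r A" for A
    using off_T[OF that] petal_subset_member(2)[OF Q0 S(2)[rule_format, OF Q0] S(1) that] by blast
  then have "F \<subseteq> hilton_milner_family r n c T"
    by (rule subset_hilton_milner_family[OF S_eq T B])
  then have "card F \<le> card (hilton_milner_family r n c T)"
    by (intro card_mono) (auto simp: hilton_milner_family_def)
  then show ?thesis using card_hilton_milner_family[OF c(1) T(1)] T(2) by simp
qed

lemma card_le_max_bound:
  assumes tr: "t + 2 \<le> r" and n: "2 ^ r * r * r + (r - t)^2 \<le> n"
  shows "card F \<le> max (n ^ (r - t) - (n - 1) ^ (r - t) + t * (n - 1))
                      (n ^ (r - (t + 2)) + (t + 2) * ((n - 1) * n ^ (r - (t + 2))))"
proof (cases "\<exists>Q1\<in>fat_sets. \<exists>Q2\<in>fat_sets. \<exists>Q3\<in>fat_sets. Q1 \<noteq> Q2 \<and> \<not> Q1 \<inter> Q2 \<subseteq> Q3")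
  case True
  then show ?thesis using card_le_frankl_bound by (meson le_trans max.cobounded2)
next
  case False
  then have sunflower: "\<forall>Q1\<in>fat_sets. \<forall>Q2\<in>fat_sets. \<forall>Q3\<in>fat_sets. Q1 \<noteq> Q2 \<longrightarrow> Q1 \<inter> Q2 \<subseteq> Q3"
    by blast
  show ?thesis
  proof (cases "r - t \<le> card fat_sets")
    case True
    then have "2 \<le> card fat_sets" using tr by linarith
    from card_le_hilton_milner_bound[OF this True sunflower] show ?thesis
      by (meson le_trans max.cobounded1)
  next
    case False
    then have few: "card fat_sets \<le> r - t - 1" by linarith
    have "card F \<le> card fat_sets * n ^ (r - t - 1) + 2 ^ r * r * (r * n ^ (r - t - 2))"
      by (rule card_le_few_fat_sets)
    also have "\<dots> \<le> (r - t - 1) * n ^ (r - t - 1) + (2 ^ r * r * r) * n ^ (r - t - 2)"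
      using few by (simp add: mult_right_mono)
    also have "\<dots> \<le> n ^ (r - t) - (n - 1) ^ (r - t)"
      using power_diff_power_diff_one_ge[of "r - t" "2 ^ r * r * r" n] tr n
      by (simp add: diff_diff_add)
    finally show ?thesis by (meson le_trans le_add1 max.cobounded1)
  qed
qed

end

section \<open>The value of iota0\<close>

lemma iota0_uniform_eqI:
  assumes "nontrivial_t_intersecting r (\<lambda>_. n) t F0" "card F0 = m"
    and "\<And>F. nontrivial_t_intersecting r (\<lambda>_. n) t F \<Longrightarrow> card F \<le> m"
  shows "iota0_uniform t n r = m"
proof -
  have "{F. nontrivial_t_intersecting r (\<lambda>_. n) t F} \<subseteq> Pow (grid r (\<lambda>_. n))"
    unfolding nontrivial_t_intersecting_def by auto
  then have "finite {F. nontrivial_t_intersecting r (\<lambda>_. n) t F}"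
    by (rule finite_subset) simp
  then show ?thesis
    unfolding iota0_uniform_def iota0_def using assms by (intro Max_eqI) auto
qed

lemma iota0_uniform_eq_max:
  assumes t: "1 \<le> t" "t + 2 \<le> r" and n: "2 ^ r * r * r + (r - t)^2 + 2 \<le> n"
  shows "iota0_uniform t n r = max (n ^ (r - t) - (n - 1) ^ (r - t) + t * (n - 1))
                                   (n ^ (r - (t + 2)) + (t + 2) * ((n - 1) * n ^ (r - (t + 2))))"
proof -
  define c where "c = restrict (\<lambda>_. 0::nat) {..<r}"
  have n2: "2 \<le> n" using n by simp
  then have c: "c \<in> grid r (\<lambda>_. n)" unfolding c_def grid_def by auto
  have T: "{..<t} \<subseteq> {..<r}" and D: "{..<t + 2} \<subseteq> {..<r}" using t by auto
  let ?hm = "n ^ (r - t) - (n - 1) ^ (r - t) + t * (n - 1)"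
  let ?fr = "n ^ (r - (t + 2)) + (t + 2) * ((n - 1) * n ^ (r - (t + 2)))"
  have upper: "card F \<le> max ?hm ?fr" if "nontrivial_t_intersecting r (\<lambda>_. n) t F" for F
  proof -
    interpret nontrivial_t_intersecting_family r n t F
      by unfold_locales (use that in \<open>auto simp: nontrivial_t_intersecting_def\<close>)
    show ?thesis using card_le_max_bound t(2) n by simp
  qed
  show ?thesis
  proof (cases "?hm \<le> ?fr")
    case True
    then show ?thesis
      using iota0_uniform_eqI[OF nontrivial_frankl_family[OF D card_lessThan t(1) n2 c] _ upper]
        card_frankl_family[OF c D] by simp
  next
    case False
    then show ?thesis
      using iota0_uniform_eqI[OF nontrivial_hilton_milner_family[OF T card_lessThan t n2 c] _ upper]
        card_hilton_milner_family[OF c T] by simp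
  qed
qed

lemma int_hilton_milner_bound:
  assumes "1 \<le> n"
  shows "int (n ^ m - (n - 1) ^ m + t * (n - 1))
    = int n ^ m - (int n - 1) ^ m + int t * (int n - 1)"
  using assms power_mono[of "n - 1" n m] by (simp add: of_nat_diff)

lemma int_frankl_bound:
  assumes "1 \<le> n"
  shows "int (n ^ k + (t + 2) * ((n - 1) * n ^ k))
    = (int t + 2) * int n ^ Suc k - (int t + 1) * int n ^ k"
proof -
  have "int (n ^ k + (t + 2) * ((n - 1) * n ^ k))
      = int n ^ k + (int t + 2) * ((int n - 1) * int n ^ k)"
    using assms by (simp add: of_nat_diff distrib_right)
  also have "\<dots> = (int t + 2) * int n ^ Suc k - (int t + 1) * int n ^ k"
    by (simp add: algebra_simps)
  finally show ?thesis .
qed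

theorem theorem1p5:
  fixes r t :: nat
  assumes "r \<ge> 3" and "1 \<le> t" and "t \<le> r - 2"
  shows "\<exists>N::nat. \<forall>n\<ge>N.
    int (iota0_uniform t n r) =
      max (int n ^ (r - t) - (int n - 1) ^ (r - t) + int t * (int n - 1))
          ((int t + 2) * int n ^ (r - t - 1) - (int t + 1) * int n ^ (r - t - 2))"
proof (intro exI[of _ "2 ^ r * r * r + (r - t)^2 + 2"] allI impI)
  fix n assume n: "2 ^ r * r * r + (r - t)^2 + 2 \<le> n"
  have tr: "t + 2 \<le> r" using assms by linarith
  have n1: "1 \<le> n" using n by simp
  have exponents: "r - t - 1 = Suc (r - (t + 2))" "r - t - 2 = r - (t + 2)" using tr by auto
  show "int (iota0_uniform t n r) =
      max (int n ^ (r - t) - (int n - 1) ^ (r - t) + int t * (int n - 1))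
          ((int t + 2) * int n ^ (r - t - 1) - (int t + 1) * int n ^ (r - t - 2))"
    unfolding iota0_uniform_eq_max[OF assms(2) tr n] of_nat_max exponents
      int_hilton_milner_bound[OF n1] int_frankl_bound[OF n1] ..
qed

end
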